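(* Let $\Omega\subset\mathbb{R}^2$ be an open, bounded, sufficiently regular domain with unit outward normal $\bm{n}$ on $\partial\Omega$. Let $\bm{\sigma}_1,\bm{\sigma}_2$ be planar residual stresses on $\Omega$, i.e. symmetric, square-integrable second-order tensor fields on $\Omega$ with $\operatorname{div}\bm{\sigma}_k=\bm{0}$ in $\Omega$ and $\bm{\sigma}_k\bm{n}=\bm{0}$ on $\partial\Omega$ ($k=1,2$). Then $$\int_\Omega \bm{\sigma}_1\cdot\bm{\sigma}_2\,dA=\int_\Omega \bar\sigma_1\,\bar\sigma_2\,dA,$$ where $\bar\sigma_k=\sigma_{k,xx}+\sigma_{k,yy}$ denotes the planar trace of $\bm{\sigma}_k$.
   Context: $\bm{A}\cdot\bm{B}=A_{ij}B_{ij}$ denotes full contraction of second-order tensors; $\operatorname{div}\bm{\sigma}=\sigma_{ij,j}\bm{e}_i$. *)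

theory Defs
  imports "HOL-Analysis.Analysis"
begin

definition full_contraction :: "real^2^2 \<Rightarrow> real^2^2 \<Rightarrow> real" where
  "full_contraction A B = (\<Sum>i\<in>UNIV. \<Sum>j\<in>UNIV. A $ i $ j * B $ i $ j)"

definition planar_trace :: "real^2^2 \<Rightarrow> real" where
  "planar_trace A = (\<Sum>i\<in>UNIV. A $ i $ i)"

text \<open>Admissible test fields: continuously differentiable vector fields on the whole plane
  (restrictions to \<open>\<Omega>\<close> are dense in \<open>H^1(\<Omega>)\<close> for regular \<open>\<Omega>\<close>).
  \<open>Dv x\<close> is the derivative at \<open>x\<close>; \<open>\<partial>_j v_i = Dv x (axis j 1) $ i\<close>.\<close>

definition C1_field :: "(real^2 \<Rightarrow> real^2) \<Rightarrow> (real^2 \<Rightarrow> real^2 \<Rightarrow> real^2) \<Rightarrow> bool" where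
  "C1_field v Dv \<longleftrightarrow> (\<forall>x. (v has_derivative Dv x) (at x)) \<and>
     (\<forall>i j. continuous_on UNIV (\<lambda>x. Dv x (axis j 1) $ i))"

text \<open>Residual stress on \<open>\<Omega>\<close>: symmetric, square-integrable, and in equilibrium with zero
  tractions, in the weak sense: \<open>\<integral>\<^sub>\<Omega> \<sigma> \<cdot> \<nabla>v dA = 0\<close> for all test fields \<open>v\<close> (this
  encodes both \<open>div \<sigma> = 0\<close> in \<open>\<Omega>\<close> and \<open>\<sigma> n = 0\<close> on \<open>\<partial>\<Omega>\<close>).\<close>

definition residual_stress :: "(real^2) set \<Rightarrow> (real^2 \<Rightarrow> real^2^2) \<Rightarrow> bool" where
  "residual_stress \<Omega> \<sigma> \<longleftrightarrow>
     (\<forall>x\<in>\<Omega>. transpose (\<sigma> x) = \<sigma> x) \<and>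
     (\<forall>i j. set_borel_measurable lebesgue \<Omega> (\<lambda>x. \<sigma> x $ i $ j) \<and>
            set_integrable lebesgue \<Omega> (\<lambda>x. (\<sigma> x $ i $ j)\<^sup>2)) \<and>
     (\<forall>v Dv. C1_field v Dv \<longrightarrow>
        (LINT x:\<Omega>|lebesgue. (\<Sum>i\<in>UNIV. \<Sum>j\<in>UNIV. \<sigma> x $ i $ j * (Dv x (axis j 1) $ i))) = 0)"

end

theory Submission
  imports Defs
begin

text \<open>Extend both stresses by zero outside \<open>\<Omega>\<close>. Equilibrium with zero tractions then says
  that every row of the extended fields is weakly divergence-free in the whole plane. For two such
  rows \<open>a\<close> and \<open>b\<close> the integral of \<open>a\<^sub>1 b\<^sub>2 - a\<^sub>2 b\<^sub>1\<close> vanishes: formally \<open>a\<close> and \<open>b\<close> are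
  rotated gradients of potentials \<open>\<alpha>\<close> and \<open>\<beta>\<close>, and \<open>a\<^sub>1 b\<^sub>2 - a\<^sub>2 b\<^sub>1\<close> is the Jacobian
  determinant of \<open>(\<alpha>, \<beta>)\<close>, a null Lagrangian. Instead of constructing potentials, we test the
  equilibrium of \<open>a\<close> and of \<open>b\<close> against translates of one \<open>C\<^sup>1\<close> function \<open>\<Psi>\<close> whose first
  partial derivative is a mollifier \<open>\<rho>\<close>; by Fubini this gives
  \<open>\<integral> a\<^sub>1 (b\<^sub>2 \<star> \<rho>) = \<integral> a\<^sub>2 (b\<^sub>1 \<star> \<rho>)\<close>, and letting the width of \<open>\<rho>\<close> tend to zero
  (continuity of translation in \<open>L\<^sup>2\<close>) yields the claim. Used for the row pairs \<open>(1, 2)\<close> and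
  \<open>(2, 1)\<close> together with the symmetry of the stresses, it turns \<open>\<integral> \<sigma>\<^sub>1 \<cdot> \<sigma>\<^sub>2\<close> into
  \<open>\<integral> tr \<sigma>\<^sub>1 tr \<sigma>\<^sub>2\<close>.\<close>

lemma lborel_distr_unit_affine:
  fixes t :: "'a::euclidean_space"
  assumes "\<bar>c\<bar> = 1"
  shows "distr lborel borel (\<lambda>x. t + c *\<^sub>R x) = (lborel :: 'a measure)"
  using lborel_affine[of c t] assms by (simp add: density_1)

lemma
  fixes f :: "'a::euclidean_space \<Rightarrow> real"
  assumes f: "f \<in> borel_measurable borel"
  shows integral_lborel_translate: "(\<integral>x. f (x - h) \<partial>lborel) = integral\<^sup>L lborel f"
    and integral_lborel_reflect: "(\<integral>y. f (x - y) \<partial>lborel) = integral\<^sup>L lborel f"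
    and integrable_lborel_translate_iff: "integrable lborel (\<lambda>x. f (x - h)) \<longleftrightarrow> integrable lborel f"
    and integrable_lborel_reflect_iff: "integrable lborel (\<lambda>y. f (x - y)) \<longleftrightarrow> integrable lborel f"
proof -
  have affine: "integral\<^sup>L lborel f = (\<integral>x. f (t + c *\<^sub>R x) \<partial>lborel)"
    "integrable lborel f \<longleftrightarrow> integrable lborel (\<lambda>x. f (t + c *\<^sub>R x))"
    if "\<bar>c\<bar> = 1" for c t
    using integral_distr[of "\<lambda>x. t + c *\<^sub>R x" lborel borel f]
      integrable_distr_eq[of "\<lambda>x. t + c *\<^sub>R x" lborel borel f]
    by (simp_all add: lborel_distr_unit_affine[OF that] f)
  from affine[of 1 "- h"] affine[of "-1" x]
  show "(\<integral>x. f (x - h) \<partial>lborel) = integral\<^sup>L lborel f"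
    and "(\<integral>y. f (x - y) \<partial>lborel) = integral\<^sup>L lborel f"
    and "integrable lborel (\<lambda>x. f (x - h)) \<longleftrightarrow> integrable lborel f"
    and "integrable lborel (\<lambda>y. f (x - y)) \<longleftrightarrow> integrable lborel f"
    by simp_all
qed

lemma abs_mult_le_weighted_squares:
  fixes a b t :: real
  assumes "t > 0"
  shows "\<bar>a * b\<bar> \<le> t / 2 * a\<^sup>2 + 1 / (2 * t) * b\<^sup>2"
proof -
  have "2 * t * \<bar>a * b\<bar> \<le> t\<^sup>2 * a\<^sup>2 + b\<^sup>2"
    using zero_le_power2[of "t * \<bar>a\<bar> - \<bar>b\<bar>"] by (simp add: power2_eq_square algebra_simps abs_mult)
  with assms show ?thesis
    by (simp add: field_simps power2_eq_square)
qed

definition L2 :: "('a::euclidean_space \<Rightarrow> real) \<Rightarrow> bool" where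
  "L2 f \<longleftrightarrow> f \<in> borel_measurable borel \<and> integrable lborel (\<lambda>x. (f x)\<^sup>2)"

lemma L2_integrable_mult:
  assumes "L2 f" "L2 g"
  shows "integrable lborel (\<lambda>x. f x * g x)"
proof (rule Bochner_Integration.integrable_bound)
  show "integrable lborel (\<lambda>x. (f x)\<^sup>2 + (g x)\<^sup>2)"
    using assms unfolding L2_def by auto
  show "(\<lambda>x. f x * g x) \<in> borel_measurable lborel"
    using assms unfolding L2_def by auto
  show "AE x in lborel. norm (f x * g x) \<le> norm ((f x)\<^sup>2 + (g x)\<^sup>2)"
  proof (intro AE_I2)
    fix x
    have "\<bar>f x * g x\<bar> \<le> 1 / 2 * (f x)\<^sup>2 + 1 / 2 * (g x)\<^sup>2"
      using abs_mult_le_weighted_squares[of 1 "f x" "g x"] by simp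
    then show "norm (f x * g x) \<le> norm ((f x)\<^sup>2 + (g x)\<^sup>2)"
      by simp
  qed
qed

lemma L2_diff:
  assumes "L2 f" "L2 g"
  shows "L2 (\<lambda>x. f x - g x)"
proof -
  have "integrable lborel (\<lambda>x. (f x - g x)\<^sup>2)"
  proof (rule Bochner_Integration.integrable_bound)
    show "integrable lborel (\<lambda>x. 2 * (f x)\<^sup>2 + 2 * (g x)\<^sup>2)"
      using assms by (auto simp: L2_def)
    show "(\<lambda>x. (f x - g x)\<^sup>2) \<in> borel_measurable lborel"
      using assms by (auto simp: L2_def)
    have "(u - v)\<^sup>2 \<le> 2 * u\<^sup>2 + 2 * v\<^sup>2" for u v :: real
      using zero_le_power2[of "u + v"] by (simp add: power2_eq_square algebra_simps)
    then show "AE x in lborel. norm ((f x - g x)\<^sup>2) \<le> norm (2 * (f x)\<^sup>2 + 2 * (g x)\<^sup>2)"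
      by (intro AE_I2) simp
  qed
  with assms show ?thesis by (auto simp: L2_def)
qed

lemma
  assumes "L2 f"
  shows L2_translate: "L2 (\<lambda>x. f (x - h))"
    and integral_square_translate: "(\<integral>x. (f (x - h))\<^sup>2 \<partial>lborel) = (\<integral>x. (f x)\<^sup>2 \<partial>lborel)"
proof -
  have f: "f \<in> borel_measurable borel" using assms by (simp add: L2_def)
  then have "(\<lambda>x. (f x)\<^sup>2) \<in> borel_measurable borel" by measurable
  from integrable_lborel_translate_iff[OF this] integral_lborel_translate[OF this]
  show "L2 (\<lambda>x. f (x - h))" "(\<integral>x. (f (x - h))\<^sup>2 \<partial>lborel) = (\<integral>x. (f x)\<^sup>2 \<partial>lborel)"
    using assms f by (auto simp: L2_def)
qed

lemma L2_indicator:
  assumes "A \<in> sets borel" "bounded A"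
  shows "L2 (indicator A :: 'a::euclidean_space \<Rightarrow> real)"
proof -
  have "integrable lborel (indicator A :: 'a \<Rightarrow> real)"
    using assms emeasure_bounded_finite[OF assms(2)] by simp
  moreover have "(\<lambda>x. (indicator A x :: real)\<^sup>2) = indicator A"
    by (auto simp: indicator_def)
  ultimately show ?thesis using assms(1) by (simp add: L2_def)
qed

lemma L2_bounded_support_integrable:
  assumes "L2 f" and "bounded S" and "S \<in> sets borel" and "\<And>x. x \<notin> S \<Longrightarrow> f x = 0"
  shows "integrable lborel f"
proof (rule Bochner_Integration.integrable_bound)
  show "integrable lborel (\<lambda>x. indicator S x + (f x)\<^sup>2 :: real)"
    using assms emeasure_bounded_finite[OF assms(2)] by (simp add: L2_def)
  show "f \<in> borel_measurable lborel" using assms(1) by (simp add: L2_def)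
  have "\<bar>f x\<bar> \<le> indicator S x + (f x)\<^sup>2" for x
    using assms(4)[of x] abs_mult_le_weighted_squares[of 1 "f x" 1]
    by (cases "x \<in> S") (auto simp: power2_eq_square)
  then show "AE x in lborel. norm (f x) \<le> norm (indicator S x + (f x)\<^sup>2 :: real)"
    by (intro AE_I2) simp
qed

lemma L2_pairing_small:
  assumes p: "L2 p" and "\<epsilon> > 0"
  obtains \<eta> where "\<eta> > 0"
    and "\<And>g. L2 g \<Longrightarrow> (\<integral>x. (g x)\<^sup>2 \<partial>lborel) < \<eta> \<Longrightarrow> \<bar>\<integral>x. p x * g x \<partial>lborel\<bar> < \<epsilon>"
proof
  define N where "N = (\<integral>x. (p x)\<^sup>2 \<partial>lborel)"
  have "N \<ge> 0" unfolding N_def by (rule integral_nonneg_AE) simp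
  define t where "t = \<epsilon> / (N + 1)"
  have t: "t > 0" "t * N < \<epsilon>"
    using \<open>N \<ge> 0\<close> \<open>\<epsilon> > 0\<close> by (auto simp: t_def field_simps)
  show "t * \<epsilon> > 0" using t \<open>\<epsilon> > 0\<close> by simp
  fix g :: "'a \<Rightarrow> real" assume g: "L2 g" "(\<integral>x. (g x)\<^sup>2 \<partial>lborel) < t * \<epsilon>"
  have sq: "integrable lborel (\<lambda>x. (p x)\<^sup>2)" "integrable lborel (\<lambda>x. (g x)\<^sup>2)"
    using p g by (auto simp: L2_def)
  have "\<bar>\<integral>x. p x * g x \<partial>lborel\<bar> \<le> (\<integral>x. \<bar>p x * g x\<bar> \<partial>lborel)"
    by (rule integral_abs_bound)
  also have "\<dots> \<le> (\<integral>x. t / 2 * (p x)\<^sup>2 + 1 / (2 * t) * (g x)\<^sup>2 \<partial>lborel)"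
    using L2_integrable_mult[OF p g(1)] sq abs_mult_le_weighted_squares[OF t(1)]
    by (intro integral_mono) auto
  also have "\<dots> = t / 2 * N + 1 / (2 * t) * (\<integral>x. (g x)\<^sup>2 \<partial>lborel)"
    using sq by (simp add: N_def)
  also have "\<dots> < \<epsilon>"
  proof -
    have "1 / (2 * t) * (\<integral>x. (g x)\<^sup>2 \<partial>lborel) < \<epsilon> / 2"
      using t g(2) by (simp add: field_simps)
    then show ?thesis using t by simp
  qed
  finally show "\<bar>\<integral>x. p x * g x \<partial>lborel\<bar> < \<epsilon>" .
qed

section \<open>Continuity of translation\<close>

lemma indicator_translate_diff_square_le:
  fixes A U C :: "'a::euclidean_space set"
  assumes "C \<subseteq> A" "A \<subseteq> U" and sep: "\<forall>x\<in>C. \<forall>y\<in>-U. d \<le> dist x y" and "norm h < d"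
  shows "(indicator A (x - h) - indicator A x :: real)\<^sup>2
    \<le> indicator (U - C) x + indicator (U - C) (x - h)"
proof -
  have near: "y \<in> U" if "z \<in> C" "dist z y < d" for y z
    using sep that by force
  have "dist x (x - h) < d" "dist (x - h) x < d"
    using \<open>norm h < d\<close> by (simp_all add: dist_norm)
  then show ?thesis
    using near assms(1,2) by (auto simp: indicator_def)
qed

lemma bounded_borel_sandwich:
  fixes A :: "'a::euclidean_space set"
  assumes A: "A \<in> sets borel" "bounded A" and "e > 0"
  obtains U C d where "C \<subseteq> A" "A \<subseteq> U" "U - C \<in> sets borel" "emeasure lborel (U - C) < \<infinity>"
    "measure lborel (U - C) < e" "d > 0" "\<forall>x\<in>C. \<forall>y\<in>-U. d \<le> dist x y"
proof -
  have "A \<in> sets lebesgue" "e / 2 > 0" using A \<open>e > 0\<close> by simp_all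
  obtain U where U: "open U" "A \<subseteq> U" "U - A \<in> lmeasurable" "emeasure lebesgue (U - A) < e / 2"
    using sets_lebesgue_outer_open[OF \<open>A \<in> sets lebesgue\<close> \<open>e / 2 > 0\<close>] by blast
  obtain C where C: "closed C" "C \<subseteq> A" "A - C \<in> lmeasurable" "emeasure lebesgue (A - C) < e / 2"
    using sets_lebesgue_inner_closed[OF \<open>A \<in> sets lebesgue\<close> \<open>e / 2 > 0\<close>] by blast
  have "compact C"
    using C(1,2) A(2) by (meson bounded_subset compact_eq_bounded_closed)
  then obtain d where "d > 0" "\<forall>x\<in>C. \<forall>y\<in>-U. d \<le> dist x y"
    using separate_compact_closed[of C "-U"] U(1,2) C(2) by auto
  have UC: "U - C \<in> sets borel" using U(1) C(1) by auto
  have sub: "U - C \<subseteq> (U - A) \<union> (A - C)" using C(2) by auto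
  have UAC: "(U - A) \<union> (A - C) \<in> lmeasurable" using U(3) C(3) by auto
  have "U - C \<in> lmeasurable" by (rule fmeasurableI2[OF UAC sub]) (use UC in simp)
  then have fin: "emeasure lborel (U - C) < \<infinity>"
    using UC by (simp add: fmeasurable_def)
  have "measure lebesgue (U - C) \<le> measure lebesgue ((U - A) \<union> (A - C))"
    by (rule measure_mono_fmeasurable[OF sub]) (use UC UAC in auto)
  also have "\<dots> \<le> measure lebesgue (U - A) + measure lebesgue (A - C)"
    by (rule measure_Un_le) (use U(3) C(3) in auto)
  also have "\<dots> < e"
    using U(3,4) C(3,4) \<open>e > 0\<close> by (simp add: emeasure_eq_measure2 ennreal_less_iff)
  finally have "measure lborel (U - C) < e" using UC by simp
  with C(2) U(2) UC fin \<open>d > 0\<close> \<open>\<forall>x\<in>C. \<forall>y\<in>-U. d \<le> dist x y\<close> show ?thesis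
    by (intro that) auto
qed

lemma tendsto_pairing_translate_indicator:
  fixes A :: "'a::euclidean_space set"
  assumes A: "A \<in> sets borel" "bounded A" and p: "L2 p"
  shows "((\<lambda>h. \<integral>x. p x * (indicator A (x - h) - indicator A x) \<partial>lborel) \<longlongrightarrow> 0) (nhds 0)"
proof (rule tendstoI)
  fix \<epsilon> :: real assume "\<epsilon> > 0"
  obtain \<eta> where "\<eta> > 0" and small:
    "\<And>g. L2 g \<Longrightarrow> (\<integral>x. (g x)\<^sup>2 \<partial>lborel) < \<eta> \<Longrightarrow> \<bar>\<integral>x. p x * g x \<partial>lborel\<bar> < \<epsilon>"
    using L2_pairing_small[OF p \<open>\<epsilon> > 0\<close>] by blast
  obtain U C d where CAU: "C \<subseteq> A" "A \<subseteq> U" and UC: "U - C \<in> sets borel"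
    "emeasure lborel (U - C) < \<infinity>" "measure lborel (U - C) < \<eta> / 2"
    and "d > 0" and sep: "\<forall>x\<in>C. \<forall>y\<in>-U. d \<le> dist x y"
    by (rule bounded_borel_sandwich[OF A half_gt_zero[OF \<open>\<eta> > 0\<close>]])
  have iUC: "integrable lborel (indicator (U - C) :: 'a \<Rightarrow> real)"
    "integrable lborel (\<lambda>x. indicator (U - C) (x - h) :: real)" for h
    using UC integrable_lborel_translate_iff[of "indicator (U - C) :: 'a \<Rightarrow> real" h] by simp_all
  have "\<bar>\<integral>x. p x * (indicator A (x - h) - indicator A x) \<partial>lborel\<bar> < \<epsilon>" if "norm h < d" for h
  proof (rule small)
    define D where "D x = (indicator A (x - h) - indicator A x :: real)" for x
    have D: "D \<in> borel_measurable borel" unfolding D_def using A by measurable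
    have D2: "(D x)\<^sup>2 \<le> indicator (U - C) x + indicator (U - C) (x - h)" for x
      unfolding D_def by (rule indicator_translate_diff_square_le[OF CAU sep that])
    have "integrable lborel (\<lambda>x. (D x)\<^sup>2)"
      by (rule Bochner_Integration.integrable_bound[OF Bochner_Integration.integrable_add[OF iUC]]) (use D D2 in auto)
    with D show "L2 (\<lambda>x. indicator A (x - h) - indicator A x)"
      unfolding L2_def D_def[abs_def] by (rule conjI)
    have "(\<integral>x. (D x)\<^sup>2 \<partial>lborel) \<le> (\<integral>x. indicator (U - C) x + indicator (U - C) (x - h) \<partial>lborel)"
      using \<open>integrable lborel (\<lambda>x. (D x)\<^sup>2)\<close> iUC D2 by (intro integral_mono) auto
    also have "\<dots> = 2 * measure lborel (U - C)"
      using UC iUC integral_lborel_translate[of "indicator (U - C) :: 'a \<Rightarrow> real" h] by simp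
    finally show "(\<integral>x. (indicator A (x - h) - indicator A x)\<^sup>2 \<partial>lborel) < \<eta>"
      using UC(3) by (simp add: D_def)
  qed
  with \<open>d > 0\<close> show "\<forall>\<^sub>F h in nhds 0. dist (\<integral>x. p x * (indicator A (x - h) - indicator A x) \<partial>lborel) 0 < \<epsilon>"
    unfolding eventually_nhds_metric by (auto simp: dist_norm)
qed

lemma tendsto_pairing_translate_simple:
  fixes s p :: "'a::euclidean_space \<Rightarrow> real"
  assumes s: "simple_function lborel s" and "bounded S" and s0: "\<And>x. x \<notin> S \<Longrightarrow> s x = 0"
    and p: "L2 p"
  shows "((\<lambda>h. \<integral>x. p x * (s (x - h) - s x) \<partial>lborel) \<longlongrightarrow> 0) (nhds 0)"
proof -
  define R where "R = range s - {0}"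
  have "finite R" using s unfolding simple_function_def R_def by simp
  have level: "s -` {c} \<in> sets borel" "bounded (s -` {c})" if "c \<in> R" for c
  proof -
    show "s -` {c} \<in> sets borel" using s that unfolding simple_function_def R_def by auto
    have "s -` {c} \<subseteq> S" using s0 that unfolding R_def by force
    then show "bounded (s -` {c})" using \<open>bounded S\<close> bounded_subset by blast
  qed
  have s_eq: "s x = (\<Sum>c\<in>R. c * indicator (s -` {c}) x)" for x
  proof -
    have "(\<Sum>c\<in>R. c * indicator (s -` {c}) x) = (\<Sum>c\<in>R. if c = s x then s x else 0)"
      by (intro sum.cong) (auto simp: indicator_def)
    also have "\<dots> = s x" using \<open>finite R\<close> by (simp add: sum.delta' R_def)
    finally show ?thesis by simp
  qed
  define I where "I c h = (\<integral>x. p x * (indicator (s -` {c}) (x - h) - indicator (s -` {c}) x) \<partial>lborel)"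
    for c h
  have "(\<integral>x. p x * (s (x - h) - s x) \<partial>lborel) = (\<Sum>c\<in>R. c * I c h)" for h
  proof -
    have L2_diff_c: "L2 (\<lambda>x. indicator (s -` {c}) (x - h) - indicator (s -` {c}) x :: real)"
      if "c \<in> R" for c
      using L2_diff[OF L2_translate L2_indicator[OF level[OF that]]] L2_indicator[OF level[OF that]] .
    have "(\<integral>x. p x * (s (x - h) - s x) \<partial>lborel) =
        (\<integral>x. (\<Sum>c\<in>R. c * (p x * (indicator (s -` {c}) (x - h) - indicator (s -` {c}) x))) \<partial>lborel)"
      by (subst (1 2) s_eq) (simp add: sum_subtractf[symmetric] sum_distrib_left algebra_simps)
    also have "\<dots> = (\<Sum>c\<in>R. (\<integral>x. c * (p x * (indicator (s -` {c}) (x - h) - indicator (s -` {c}) x)) \<partial>lborel))"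
      using L2_integrable_mult[OF p L2_diff_c] by (intro Bochner_Integration.integral_sum) auto
    also have "\<dots> = (\<Sum>c\<in>R. c * I c h)"
      unfolding I_def by simp
    finally show ?thesis .
  qed
  moreover have "((\<lambda>h. \<Sum>c\<in>R. c * I c h) \<longlongrightarrow> 0) (nhds 0)"
    unfolding I_def
    by (intro tendsto_null_sum tendsto_mult_right_zero tendsto_pairing_translate_indicator level p)
  ultimately show ?thesis by simp
qed

lemma simple_function_L2_approx:
  fixes q :: "'a::euclidean_space \<Rightarrow> real"
  assumes q: "L2 q" and "\<eta> > 0"
  obtains s where "simple_function lborel s" "L2 s" "\<And>x. \<bar>s x\<bar> \<le> 2 * \<bar>q x\<bar>"
    "(\<integral>x. (q x - s x)\<^sup>2 \<partial>lborel) < \<eta>"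
proof -
  have qm: "q \<in> borel_measurable lborel" using q by (simp add: L2_def)
  obtain F where F: "\<And>i. simple_function lborel (F i)" "\<And>x. (\<lambda>i. F i x) \<longlonglongrightarrow> q x"
    "\<And>i x. dist (F i x) 0 \<le> 2 * dist (q x) 0"
    using borel_measurable_implies_sequence_metric[OF qm, of 0] by auto
  have Fb: "\<bar>F i x\<bar> \<le> 2 * \<bar>q x\<bar>" for i x using F(3)[of i x] by simp
  have "(\<lambda>i. \<integral>x. (q x - F i x)\<^sup>2 \<partial>lborel) \<longlonglongrightarrow> (\<integral>x. 0 \<partial>(lborel :: 'a measure))"
  proof (rule Bochner_Integration.integral_dominated_convergence
      [where w="\<lambda>x. 9 * (q x)\<^sup>2" and s="\<lambda>i x. (q x - F i x)\<^sup>2" and f="\<lambda>x. 0"])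
    show "(\<lambda>x. (q x - F i x)\<^sup>2) \<in> borel_measurable lborel" for i
      using qm borel_measurable_simple_function[OF F(1)] by measurable
    show "integrable lborel (\<lambda>x. 9 * (q x)\<^sup>2)" using q by (simp add: L2_def)
    show "AE x in lborel. (\<lambda>i. (q x - F i x)\<^sup>2) \<longlonglongrightarrow> 0"
      using F(2) by (intro AE_I2) (auto intro!: tendsto_eq_intros)
    show "AE x in lborel. norm ((q x - F i x)\<^sup>2) \<le> 9 * (q x)\<^sup>2" for i
    proof (intro AE_I2)
      fix x
      have "\<bar>q x - F i x\<bar>\<^sup>2 \<le> (3 * \<bar>q x\<bar>)\<^sup>2"
        using Fb[of i x] by (intro power_mono) auto
      then show "norm ((q x - F i x)\<^sup>2) \<le> 9 * (q x)\<^sup>2" by (simp add: power_mult_distrib)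
    qed
  qed simp
  from LIMSEQ_D[OF this \<open>\<eta> > 0\<close>] obtain i where "(\<integral>x. (q x - F i x)\<^sup>2 \<partial>lborel) < \<eta>"
    by fastforce
  moreover have "L2 (F i)"
  proof -
    have "integrable lborel (\<lambda>x. (F i x)\<^sup>2)"
    proof (rule Bochner_Integration.integrable_bound)
      show "integrable lborel (\<lambda>x. 4 * (q x)\<^sup>2)" using q by (simp add: L2_def)
      have "\<bar>F i x\<bar>\<^sup>2 \<le> (2 * \<bar>q x\<bar>)\<^sup>2" for x using Fb[of i x] by (intro power_mono) auto
      then show "AE x in lborel. norm ((F i x)\<^sup>2) \<le> norm (4 * (q x)\<^sup>2)"
        by (intro AE_I2) (simp add: power_mult_distrib)
    qed (use borel_measurable_simple_function[OF F(1)] in simp)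
    then show ?thesis using borel_measurable_simple_function[OF F(1)] by (simp add: L2_def)
  qed
  ultimately show ?thesis using F(1) Fb by (intro that) auto
qed

text \<open>Approximate \<open>q\<close> in \<open>L\<^sup>2\<close> by a simple function, a finite combination of indicators of
  bounded Borel sets; for those, inner and outer regularity of Lebesgue measure do the job.\<close>
lemma tendsto_pairing_translate:
  fixes p q :: "'a::euclidean_space \<Rightarrow> real"
  assumes p: "L2 p" and q: "L2 q" and "bounded S" and q0: "\<And>x. x \<notin> S \<Longrightarrow> q x = 0"
  shows "((\<lambda>h. \<integral>x. p x * q (x - h) \<partial>lborel) \<longlongrightarrow> (\<integral>x. p x * q x \<partial>lborel)) (nhds 0)"
proof (rule tendstoI)
  fix \<epsilon> :: real assume "\<epsilon> > 0"
  then obtain \<eta> where "\<eta> > 0" and small: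
    "\<And>g. L2 g \<Longrightarrow> (\<integral>x. (g x)\<^sup>2 \<partial>lborel) < \<eta> \<Longrightarrow> \<bar>\<integral>x. p x * g x \<partial>lborel\<bar> < \<epsilon> / 3"
    using L2_pairing_small[OF p, of "\<epsilon> / 3"] by auto
  obtain s where s: "simple_function lborel s" "\<And>x. \<bar>s x\<bar> \<le> 2 * \<bar>q x\<bar>"
    and L2s: "L2 s" and qs: "(\<integral>x. (q x - s x)\<^sup>2 \<partial>lborel) < \<eta>"
    using simple_function_L2_approx[OF q \<open>\<eta> > 0\<close>] by blast
  define r where "r x = q x - s x" for x
  have L2r: "L2 r" unfolding r_def by (rule L2_diff[OF q L2s])
  have "s x = 0" if "x \<notin> S" for x using s(2)[of x] q0[OF that] by simp
  then have "((\<lambda>h. \<integral>x. p x * (s (x - h) - s x) \<partial>lborel) \<longlongrightarrow> 0) (nhds 0)"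
    by (rule tendsto_pairing_translate_simple[OF s(1) \<open>bounded S\<close> _ p])
  from tendstoD[OF this, of "\<epsilon> / 3"] \<open>\<epsilon> > 0\<close>
  have "\<forall>\<^sub>F h in nhds 0. \<bar>\<integral>x. p x * (s (x - h) - s x) \<partial>lborel\<bar> < \<epsilon> / 3"
    by (simp add: dist_norm)
  then show "\<forall>\<^sub>F h in nhds 0. dist (\<integral>x. p x * q (x - h) \<partial>lborel) (\<integral>x. p x * q x \<partial>lborel) < \<epsilon>"
  proof eventually_elim
    case (elim h)
    have q_split: "(\<integral>x. p x * q (x - t) \<partial>lborel)
      = (\<integral>x. p x * s (x - t) \<partial>lborel) + (\<integral>x. p x * r (x - t) \<partial>lborel)" for t
    proof -
      have "(\<integral>x. p x * q (x - t) \<partial>lborel) = (\<integral>x. p x * s (x - t) + p x * r (x - t) \<partial>lborel)"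
        by (simp add: r_def algebra_simps)
      also have "\<dots> = (\<integral>x. p x * s (x - t) \<partial>lborel) + (\<integral>x. p x * r (x - t) \<partial>lborel)"
        using L2_integrable_mult[OF p L2_translate[OF L2s]] L2_integrable_mult[OF p L2_translate[OF L2r]]
        by (rule Bochner_Integration.integral_add)
      finally show ?thesis .
    qed
    have "(\<integral>x. p x * (s (x - h) - s x) \<partial>lborel) = (\<integral>x. p x * s (x - h) \<partial>lborel) - (\<integral>x. p x * s x \<partial>lborel)"
      using L2_integrable_mult[OF p L2_translate[OF L2s]] L2_integrable_mult[OF p L2s]
      by (simp add: right_diff_distrib)
    then have "(\<integral>x. p x * q (x - h) \<partial>lborel) - (\<integral>x. p x * q x \<partial>lborel)
      = (\<integral>x. p x * (s (x - h) - s x) \<partial>lborel) + (\<integral>x. p x * r (x - h) \<partial>lborel)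
        - (\<integral>x. p x * r x \<partial>lborel)"
      using q_split[of h] q_split[of 0] by simp
    moreover have "\<bar>\<integral>x. p x * r (x - h) \<partial>lborel\<bar> < \<epsilon> / 3" "\<bar>\<integral>x. p x * r x \<partial>lborel\<bar> < \<epsilon> / 3"
      using small[OF L2_translate[OF L2r]] small[OF L2r] qs integral_square_translate[OF L2r]
      by (simp_all add: r_def)
    ultimately show ?case using elim by (simp add: dist_norm)
  qed
qed

section \<open>Convolution pairings\<close>

lemma integrable_mult_bounded:
  fixes p g :: "'a \<Rightarrow> real"
  assumes "integrable M p" "g \<in> borel_measurable M" "\<And>x. \<bar>g x\<bar> \<le> B"
  shows "integrable M (\<lambda>x. p x * g x)"
proof (rule Bochner_Integration.integrable_bound[of _ "\<lambda>x. \<bar>p x\<bar> * B"])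
  show "AE x in M. norm (p x * g x) \<le> norm (\<bar>p x\<bar> * B)"
  proof (intro AE_I2)
    fix x
    have "\<bar>g x\<bar> \<le> \<bar>B\<bar>" using assms(3)[of x] by linarith
    then show "norm (p x * g x) \<le> norm (\<bar>p x\<bar> * B)" by (simp add: abs_mult mult_left_mono)
  qed
qed (use assms in auto)

lemma integrable_pair_lborel_dominated:
  fixes F :: "'a::euclidean_space \<times> 'b::euclidean_space \<Rightarrow> real"
  assumes F[measurable]: "F \<in> borel_measurable (lborel \<Otimes>\<^sub>M lborel)"
    and p: "integrable lborel p"
    and w: "\<And>x. integrable lborel (w x)" "\<And>x. (\<integral>y. w x y \<partial>lborel) \<le> C"
    and bound: "\<And>x y. \<bar>F (x, y)\<bar> \<le> \<bar>p x\<bar> * w x y"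
  shows "integrable (lborel \<Otimes>\<^sub>M lborel) F"
proof (rule lborel_pair.Fubini_integrable[OF F])
  have inner: "integrable lborel (\<lambda>y. F (x, y))" for x
    by (rule Bochner_Integration.integrable_bound[of _ "\<lambda>y. \<bar>p x\<bar> * w x y"])
      (use w(1) bound in \<open>auto intro!: AE_I2 order_trans[OF _ abs_ge_self]\<close>)
  then show "AE x in lborel. integrable lborel (\<lambda>y. F (x, y))" by simp
  show "integrable lborel (\<lambda>x. \<integral>y. norm (F (x, y)) \<partial>lborel)"
  proof (rule Bochner_Integration.integrable_bound[of _ "\<lambda>x. \<bar>p x\<bar> * C"])
    show "integrable lborel (\<lambda>x. \<bar>p x\<bar> * C)" using p by simp
    show "(\<lambda>x. \<integral>y. norm (F (x, y)) \<partial>lborel) \<in> borel_measurable lborel" by measurable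
    show "AE x in lborel. norm (\<integral>y. norm (F (x, y)) \<partial>lborel) \<le> norm (\<bar>p x\<bar> * C)"
    proof (intro AE_I2)
      fix x
      have "0 \<le> (\<integral>y. norm (F (x, y)) \<partial>lborel)" by (rule integral_nonneg_AE) simp
      moreover have "(\<integral>y. norm (F (x, y)) \<partial>lborel) \<le> (\<integral>y. \<bar>p x\<bar> * w x y \<partial>lborel)"
        using inner w(1) bound by (intro integral_mono) auto
      moreover have "(\<integral>y. \<bar>p x\<bar> * w x y \<partial>lborel) \<le> \<bar>p x\<bar> * C"
        using w(2) by (simp add: mult_left_mono)
      ultimately show "norm (\<integral>y. norm (F (x, y)) \<partial>lborel) \<le> norm (\<bar>p x\<bar> * C)"
        by simp
    qed
  qed
qed

definition convolve :: "('a::euclidean_space \<Rightarrow> real) \<Rightarrow> ('a \<Rightarrow> real) \<Rightarrow> 'a \<Rightarrow> real" where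
  "convolve q k x = (\<integral>y. q y * k (x - y) \<partial>lborel)"

lemma convolution_pairing_swap:
  fixes p q k :: "'a::euclidean_space \<Rightarrow> real"
  assumes [measurable]: "p \<in> borel_measurable borel" "q \<in> borel_measurable borel" "k \<in> borel_measurable borel"
    and "integrable lborel p" "integrable lborel q" and k: "\<And>z. \<bar>k z\<bar> \<le> M"
  shows "(\<integral>y. q y * (\<integral>x. p x * k (x - y) \<partial>lborel) \<partial>lborel) = (\<integral>x. p x * convolve q k x \<partial>lborel)"
proof -
  define F where "F x y = p x * q y * k (x - y)" for x y
  have "\<bar>F x y\<bar> \<le> \<bar>p x\<bar> * (M * \<bar>q y\<bar>)" for x y
    using mult_left_mono[OF k[of "x - y"], of "\<bar>p x\<bar> * \<bar>q y\<bar>"]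
    unfolding F_def by (simp add: abs_mult algebra_simps)
  then have "integrable (lborel \<Otimes>\<^sub>M lborel) (\<lambda>(x, y). F x y)"
    by (intro integrable_pair_lborel_dominated[where w="\<lambda>x y. M * \<bar>q y\<bar>"])
      (use assms in \<open>auto simp: F_def\<close>)
  moreover have "(\<integral>x. F x y \<partial>lborel) = q y * (\<integral>x. p x * k (x - y) \<partial>lborel)" for y
  proof -
    have "(\<integral>x. F x y \<partial>lborel) = (\<integral>x. q y * (p x * k (x - y)) \<partial>lborel)"
      by (simp add: F_def algebra_simps)
    then show ?thesis by simp
  qed
  moreover have "(\<integral>y. F x y \<partial>lborel) = p x * convolve q k x" for x
  proof -
    have "(\<integral>y. F x y \<partial>lborel) = (\<integral>y. p x * (q y * k (x - y)) \<partial>lborel)"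
      by (simp add: F_def algebra_simps)
    then show ?thesis by (simp add: convolve_def)
  qed
  ultimately show ?thesis
    using lborel_pair.Fubini_integral[of F] by simp
qed

lemma convolution_pairing_translate:
  fixes p q k :: "'a::euclidean_space \<Rightarrow> real"
  assumes [measurable]: "p \<in> borel_measurable borel" "q \<in> borel_measurable borel" "k \<in> borel_measurable borel"
    and "integrable lborel p" "integrable lborel q" and k: "\<And>z. \<bar>k z\<bar> \<le> M"
  shows "(\<integral>x. p x * convolve q k x \<partial>lborel) = (\<integral>h. k h * (\<integral>x. p x * q (x - h) \<partial>lborel) \<partial>lborel)"
    and "integrable lborel (\<lambda>h. k h * (\<integral>x. p x * q (x - h) \<partial>lborel))"
proof -
  define G where "G x h = p x * q (x - h) * k h" for x h
  have "\<bar>G x h\<bar> \<le> \<bar>p x\<bar> * (M * \<bar>q (x - h)\<bar>)" for x h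
    using mult_left_mono[OF k[of h], of "\<bar>p x\<bar> * \<bar>q (x - h)\<bar>"]
    unfolding G_def by (simp add: abs_mult algebra_simps)
  moreover have "integrable lborel (\<lambda>h. \<bar>q (x - h)\<bar>)"
    "(\<integral>h. \<bar>q (x - h)\<bar> \<partial>lborel) = (\<integral>y. \<bar>q y\<bar> \<partial>lborel)" for x
    using integrable_lborel_reflect_iff[of "\<lambda>y. \<bar>q y\<bar>" x] integral_lborel_reflect[of "\<lambda>y. \<bar>q y\<bar>" x]
      assms by simp_all
  ultimately have G: "integrable (lborel \<Otimes>\<^sub>M lborel) (\<lambda>(x, h). G x h)"
    by (intro integrable_pair_lborel_dominated[where w="\<lambda>x h. M * \<bar>q (x - h)\<bar>"
          and C="M * (\<integral>y. \<bar>q y\<bar> \<partial>lborel)"])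
      (use assms in \<open>auto simp: G_def\<close>)
  have inner_x: "(\<integral>x. G x h \<partial>lborel) = k h * (\<integral>x. p x * q (x - h) \<partial>lborel)" for h
  proof -
    have "(\<integral>x. G x h \<partial>lborel) = (\<integral>x. k h * (p x * q (x - h)) \<partial>lborel)"
      by (simp add: G_def algebra_simps)
    then show ?thesis by simp
  qed
  have inner_h: "(\<integral>h. G x h \<partial>lborel) = p x * convolve q k x" for x
  proof -
    have "convolve q k x = (\<integral>h. q (x - h) * k h \<partial>lborel)"
      using integral_lborel_reflect[of "\<lambda>y. q y * k (x - y)" x] by (simp add: convolve_def)
    moreover have "(\<integral>h. G x h \<partial>lborel) = (\<integral>h. p x * (q (x - h) * k h) \<partial>lborel)"
      by (simp add: G_def algebra_simps)
    ultimately show ?thesis by simp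
  qed
  show "(\<integral>x. p x * convolve q k x \<partial>lborel) = (\<integral>h. k h * (\<integral>x. p x * q (x - h) \<partial>lborel) \<partial>lborel)"
    using lborel_pair.Fubini_integral[OF G] by (simp add: inner_x inner_h)
  show "integrable lborel (\<lambda>h. k h * (\<integral>x. p x * q (x - h) \<partial>lborel))"
    using lborel_pair.integrable_snd[OF G] by (simp add: inner_x)
qed

lemma convolution_pairing_approx:
  fixes p q \<rho> :: "'a::euclidean_space \<Rightarrow> real"
  assumes [measurable]: "p \<in> borel_measurable borel" "q \<in> borel_measurable borel" "\<rho> \<in> borel_measurable borel"
    and "integrable lborel p" "integrable lborel q" "integrable lborel \<rho>"
    and \<rho>: "\<And>z. 0 \<le> \<rho> z" "\<And>z. \<rho> z \<le> M"
    and close: "\<And>h. \<rho> h \<noteq> 0 \<Longrightarrow>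
      \<bar>(\<integral>x. p x * q (x - h) \<partial>lborel) - (\<integral>x. p x * q x \<partial>lborel)\<bar> \<le> \<epsilon>"
  shows "\<bar>(\<integral>x. p x * convolve q \<rho> x \<partial>lborel) - (\<integral>z. \<rho> z \<partial>lborel) * (\<integral>x. p x * q x \<partial>lborel)\<bar>
    \<le> (\<integral>z. \<rho> z \<partial>lborel) * \<epsilon>"
proof -
  define P where "P h = (\<integral>x. p x * q (x - h) \<partial>lborel)" for h
  have \<rho>M: "\<bar>\<rho> z\<bar> \<le> M" for z using \<rho>[of z] by simp
  note translate = convolution_pairing_translate[OF assms(1-5) \<rho>M, folded P_def]
  have "(\<integral>x. p x * convolve q \<rho> x \<partial>lborel) - (\<integral>z. \<rho> z \<partial>lborel) * P 0
      = (\<integral>h. \<rho> h * (P h - P 0) \<partial>lborel)"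
    using translate assms(6) by (simp add: right_diff_distrib)
  also have "\<bar>\<dots>\<bar> \<le> (\<integral>h. \<bar>\<rho> h * (P h - P 0)\<bar> \<partial>lborel)"
    by (rule integral_abs_bound)
  also have "\<dots> \<le> (\<integral>h. \<rho> h * \<epsilon> \<partial>lborel)"
  proof (rule integral_mono)
    show "integrable lborel (\<lambda>h. \<bar>\<rho> h * (P h - P 0)\<bar>)"
      using translate(2) assms(6) by (simp add: right_diff_distrib)
    show "\<bar>\<rho> h * (P h - P 0)\<bar> \<le> \<rho> h * \<epsilon>" for h
      using close[of h] \<rho>(1)[of h] by (cases "\<rho> h = 0") (auto simp: P_def abs_mult mult_left_mono)
  qed (use assms(6) in simp)
  finally show ?thesis by (simp add: P_def)
qed

lemma tendsto_convolution_pairing_mollifier: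
  fixes p q :: "'a::euclidean_space \<Rightarrow> real" and \<rho> :: "real \<Rightarrow> 'a \<Rightarrow> real"
  assumes p: "L2 p" "integrable lborel p"
    and q: "L2 q" "integrable lborel q" "bounded S" "\<And>x. x \<notin> S \<Longrightarrow> q x = 0"
    and \<rho>: "\<And>l. 0 < l \<Longrightarrow> \<rho> l \<in> borel_measurable borel" "\<And>l z. 0 < l \<Longrightarrow> 0 \<le> \<rho> l z"
      "\<And>l. 0 < l \<Longrightarrow> bounded (range (\<rho> l))" "\<And>l. 0 < l \<Longrightarrow> integrable lborel (\<rho> l)"
      "\<And>l. 0 < l \<Longrightarrow> 0 < (\<integral>z. \<rho> l z \<partial>lborel)"
    and support: "\<And>r. 0 < r \<Longrightarrow> \<forall>\<^sub>F l in at_right 0. \<forall>z. \<rho> l z \<noteq> 0 \<longrightarrow> norm z < r"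
  shows "((\<lambda>l. (\<integral>x. p x * convolve q (\<rho> l) x \<partial>lborel) / (\<integral>z. \<rho> l z \<partial>lborel))
    \<longlongrightarrow> (\<integral>x. p x * q x \<partial>lborel)) (at_right 0)"
proof (rule tendstoI)
  fix \<epsilon> :: real assume "\<epsilon> > 0"
  have "\<forall>\<^sub>F h in nhds 0. dist (\<integral>x. p x * q (x - h) \<partial>lborel) (\<integral>x. p x * q x \<partial>lborel) < \<epsilon> / 2"
    by (rule tendstoD[OF tendsto_pairing_translate[OF p(1) q(1) q(3) q(4)] half_gt_zero[OF \<open>\<epsilon> > 0\<close>]])
  then obtain r where "r > 0" and close:
    "\<And>h. norm h < r \<Longrightarrow> \<bar>(\<integral>x. p x * q (x - h) \<partial>lborel) - (\<integral>x. p x * q x \<partial>lborel)\<bar> < \<epsilon> / 2"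
    unfolding eventually_nhds_metric by (auto simp: dist_norm)
  show "\<forall>\<^sub>F l in at_right 0. dist ((\<integral>x. p x * convolve q (\<rho> l) x \<partial>lborel) / (\<integral>z. \<rho> l z \<partial>lborel))
    (\<integral>x. p x * q x \<partial>lborel) < \<epsilon>"
    using eventually_at_right_less support[OF \<open>r > 0\<close>]
  proof eventually_elim
    case (elim l)
    define C where "C = (\<integral>z. \<rho> l z \<partial>lborel)"
    have "C > 0" using \<rho>(5) elim(1) by (simp add: C_def)
    obtain M where "\<And>z. \<rho> l z \<le> M"
      using \<rho>(3)[OF elim(1)] by (auto simp: bounded_real abs_le_iff)
    define J where "J = (\<integral>x. p x * convolve q (\<rho> l) x \<partial>lborel)"
    define P0 where "P0 = (\<integral>x. p x * q x \<partial>lborel)"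
    have "\<bar>J - C * P0\<bar> \<le> C * (\<epsilon> / 2)"
      unfolding C_def J_def P0_def
      using p(1) q(1) \<rho>(1,2,4)[OF elim(1)] p(2) q(2) \<open>\<And>z. \<rho> l z \<le> M\<close> close elim(2)
      by (intro convolution_pairing_approx) (auto simp: L2_def less_imp_le)
    moreover have "J / C - P0 = (J - C * P0) / C"
      using \<open>C > 0\<close> by (simp add: field_simps)
    ultimately have "\<bar>J / C - P0\<bar> \<le> \<epsilon> / 2"
      using \<open>C > 0\<close> by (simp add: abs_divide divide_le_eq mult.commute)
    with \<open>\<epsilon> > 0\<close> show ?case
      by (simp add: dist_norm J_def C_def P0_def)
  qed
qed

definition C1_function :: "(real^2 \<Rightarrow> real) \<Rightarrow> (real^2 \<Rightarrow> real^2 \<Rightarrow> real) \<Rightarrow> bool" where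
  "C1_function \<psi> D\<psi> \<longleftrightarrow> (\<forall>x. (\<psi> has_derivative D\<psi> x) (at x)) \<and>
     (\<forall>j. continuous_on UNIV (\<lambda>x. D\<psi> x (axis j 1)))"

definition weakly_div_free :: "(2 \<Rightarrow> real^2 \<Rightarrow> real) \<Rightarrow> bool" where
  "weakly_div_free a \<longleftrightarrow> (\<forall>\<psi> D\<psi>. C1_function \<psi> D\<psi> \<longrightarrow>
     (\<integral>x. (\<Sum>j\<in>UNIV. a j x * D\<psi> x (axis j 1)) \<partial>lborel) = 0)"

lemma C1_field_scaleR_axis:
  assumes "C1_function \<psi> D\<psi>"
  shows "C1_field (\<lambda>x. \<psi> x *\<^sub>R axis i 1) (\<lambda>x h. D\<psi> x h *\<^sub>R axis i 1)"
  using assms unfolding C1_function_def C1_field_def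
  by (auto intro!: has_derivative_scaleR_left continuous_intros)

lemma weakly_div_free_row:
  assumes "\<And>v Dv. C1_field v Dv \<Longrightarrow>
    (\<integral>x. (\<Sum>i\<in>UNIV. \<Sum>j\<in>UNIV. f i j x * (Dv x (axis j 1) $ i)) \<partial>lborel) = 0"
  shows "weakly_div_free (f i)"
  unfolding weakly_div_free_def
proof (intro allI impI)
  fix \<psi> D\<psi> assume "C1_function \<psi> D\<psi>"
  from assms[OF C1_field_scaleR_axis[OF this, of i]]
  show "(\<integral>x. (\<Sum>j\<in>UNIV. f i j x * D\<psi> x (axis j 1)) \<partial>lborel) = 0"
    by (simp add: axis_def if_distrib sum.If_cases)
qed

lemma C1_function_translate:
  assumes "C1_function \<Psi> D\<Psi>"
  shows "C1_function (\<lambda>x. \<Psi> (x - y)) (\<lambda>x. D\<Psi> (x - y))"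
    and "C1_function (\<lambda>y. \<Psi> (x - y)) (\<lambda>y h. - D\<Psi> (x - y) h)"
proof -
  have D: "(\<Psi> has_derivative D\<Psi> z) (at z)" for z
    using assms by (simp add: C1_function_def)
  have cont: "continuous_on UNIV (\<lambda>z. D\<Psi> z (axis j 1))" for j
    using assms by (simp add: C1_function_def)
  have "continuous_on UNIV (\<lambda>x. D\<Psi> (x - y) (axis j 1))"
    "continuous_on UNIV (\<lambda>y. - D\<Psi> (x - y) (axis j 1))" for j
    by (auto intro!: continuous_intros continuous_on_compose2[OF cont])
  moreover have "((\<lambda>x. \<Psi> (x - y)) has_derivative D\<Psi> (x - y)) (at x)" for x
    using has_derivative_compose[OF has_derivative_diff[OF has_derivative_ident has_derivative_const] D]
    by simp
  moreover have "((\<lambda>y. \<Psi> (x - y)) has_derivative (\<lambda>h. - D\<Psi> (x - y) h)) (at y)" for y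
  proof -
    have "((\<lambda>y. \<Psi> (x - y)) has_derivative (\<lambda>h. D\<Psi> (x - y) (0 - h))) (at y)"
      using has_derivative_compose[OF has_derivative_diff[OF has_derivative_const has_derivative_ident] D] .
    moreover have "linear (D\<Psi> (x - y))" using D has_derivative_linear by blast
    ultimately show ?thesis by (simp add: linear_neg)
  qed
  ultimately show "C1_function (\<lambda>x. \<Psi> (x - y)) (\<lambda>x. D\<Psi> (x - y))"
    and "C1_function (\<lambda>y. \<Psi> (x - y)) (\<lambda>y h. - D\<Psi> (x - y) h)"
    by (simp_all add: C1_function_def)
qed

text \<open>Test \<open>a\<close> with \<open>x \<mapsto> \<Psi> (x - y)\<close> and \<open>b\<close> with \<open>y \<mapsto> \<Psi> (x - y)\<close>, and exchange the order of
  integration twice.\<close>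
lemma convolution_pairing_cross:
  fixes a b :: "2 \<Rightarrow> real^2 \<Rightarrow> real"
  assumes div: "weakly_div_free a" "weakly_div_free b"
    and meas[measurable]: "\<And>j. a j \<in> borel_measurable borel" "\<And>j. b j \<in> borel_measurable borel"
    and int: "\<And>j. integrable lborel (a j)" "\<And>j. integrable lborel (b j)"
    and \<Psi>: "C1_function \<Psi> D\<Psi>" and bound: "\<And>j z. \<bar>D\<Psi> z (axis j 1)\<bar> \<le> M"
  shows "(\<integral>x. a 1 x * convolve (b 2) (\<lambda>z. D\<Psi> z (axis 1 1)) x \<partial>lborel)
    = (\<integral>x. a 2 x * convolve (b 1) (\<lambda>z. D\<Psi> z (axis 1 1)) x \<partial>lborel)"
proof -
  define \<psi> where "\<psi> j z = D\<Psi> z (axis j 1)" for j z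
  have \<psi>_meas[measurable]: "\<psi> j \<in> borel_measurable borel" for j
    using \<Psi> unfolding \<psi>_def C1_function_def by (auto intro: borel_measurable_continuous_onI)
  have \<psi>M: "\<bar>\<psi> j z\<bar> \<le> M" for j z using bound by (simp add: \<psi>_def)
  have a_int: "integrable lborel (\<lambda>x. a j x * \<psi> i (x - y))" for i j y
    by (rule integrable_mult_bounded[OF int(1) _ \<psi>M]) measurable
  have b_int: "integrable lborel (\<lambda>y. b j y * \<psi> i (x - y))" for i j x
    by (rule integrable_mult_bounded[OF int(2) _ \<psi>M]) measurable
  have a_eq: "(\<integral>x. a 1 x * \<psi> 1 (x - y) \<partial>lborel) = - (\<integral>x. a 2 x * \<psi> 2 (x - y) \<partial>lborel)" for y
  proof -
    from div(1) C1_function_translate(1)[OF \<Psi>, of y]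
    have "(\<integral>x. (\<Sum>j\<in>UNIV. a j x * D\<Psi> (x - y) (axis j 1)) \<partial>lborel) = 0"
      unfolding weakly_div_free_def by blast
    then have "(\<integral>x. a 1 x * \<psi> 1 (x - y) + a 2 x * \<psi> 2 (x - y) \<partial>lborel) = 0"
      by (simp add: sum_2 \<psi>_def)
    with a_int show ?thesis by simp
  qed
  have b_eq: "convolve (b 1) (\<psi> 1) x = - convolve (b 2) (\<psi> 2) x" for x
  proof -
    from div(2) C1_function_translate(2)[OF \<Psi>, of x]
    have "(\<integral>y. (\<Sum>j\<in>UNIV. b j y * - D\<Psi> (x - y) (axis j 1)) \<partial>lborel) = 0"
      unfolding weakly_div_free_def by blast
    then have "(\<integral>y. - (b 1 y * \<psi> 1 (x - y)) - b 2 y * \<psi> 2 (x - y) \<partial>lborel) = 0"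
      by (simp add: sum_2 \<psi>_def)
    with b_int show ?thesis by (simp add: convolve_def)
  qed
  have "(\<integral>x. a 2 x * convolve (b 1) (\<psi> 1) x \<partial>lborel) = - (\<integral>x. a 2 x * convolve (b 2) (\<psi> 2) x \<partial>lborel)"
    by (simp add: b_eq)
  also have "\<dots> = - (\<integral>y. b 2 y * (\<integral>x. a 2 x * \<psi> 2 (x - y) \<partial>lborel) \<partial>lborel)"
    using convolution_pairing_swap[where p="a 2" and q="b 2" and k="\<psi> 2", OF meas(1) meas(2) \<psi>_meas int \<psi>M] by simp
  also have "\<dots> = (\<integral>y. b 2 y * (\<integral>x. a 1 x * \<psi> 1 (x - y) \<partial>lborel) \<partial>lborel)"
    by (simp add: a_eq)
  also have "\<dots> = (\<integral>x. a 1 x * convolve (b 2) (\<psi> 1) x \<partial>lborel)"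
    using convolution_pairing_swap[where p="a 1" and q="b 2" and k="\<psi> 1", OF meas(1) meas(2) \<psi>_meas int \<psi>M] by simp
  finally show ?thesis by (simp add: \<psi>_def[abs_def])
qed

section \<open>A mollifier built from quadratic B-splines\<close>

lemma has_real_derivative_max0_power:
  assumes "n > 0"
  shows "((\<lambda>x::real. max 0 x ^ Suc n) has_real_derivative real (Suc n) * max 0 x ^ n) (at x)"
proof (cases x "0::real" rule: linorder_cases)
  case less
  have "((\<lambda>x::real. 0) has_real_derivative real (Suc n) * max 0 x ^ n) (at x)"
    using less assms by (simp add: power_0_left)
  then show ?thesis
    by (rule has_field_derivative_transform_within_open[where S="{..<0}"]) (use less in auto)
next
  case greater
  have "((\<lambda>x::real. x ^ Suc n) has_real_derivative real (Suc n) * max 0 x ^ n) (at x)"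
    using DERIV_pow[of "Suc n" x] greater by simp
  then show ?thesis
    by (rule has_field_derivative_transform_within_open[where S="{0<..}"]) (use greater in auto)
next
  case equal
  have "((\<lambda>y::real. (max 0 y ^ Suc n - max 0 0 ^ Suc n) / (y - 0)) \<longlongrightarrow> 0) (at 0)"
  proof (rule Lim_null_comparison)
    have "\<bar>(max 0 y ^ Suc n - max 0 0 ^ Suc n) / (y - 0)\<bar> \<le> \<bar>y\<bar> ^ n" for y :: real
      by (cases "y > 0") (auto simp: power_abs)
    then show "\<forall>\<^sub>F y in at 0. norm ((max 0 y ^ Suc n - max 0 0 ^ Suc n) / (y - 0)) \<le> \<bar>y::real\<bar> ^ n"
      by (simp add: always_eventually)
    show "((\<lambda>y::real. \<bar>y\<bar> ^ n) \<longlongrightarrow> 0) (at 0)"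
      using assms by (auto intro!: tendsto_eq_intros)
  qed
  with equal assms show ?thesis by (simp add: has_field_derivative_iff power_0_left)
qed

text \<open>The third finite difference of the truncated power \<open>max 0 t ^ n\<close>: \<open>spline 2\<close> is twice
  the quadratic cardinal B-spline on \<open>[0, 3]\<close>, and \<open>spline 1\<close>, \<open>spline 3\<close> are, up to constant
  factors, its derivative and its antiderivative.\<close>
definition spline :: "nat \<Rightarrow> real \<Rightarrow> real" where
  "spline n t = max 0 t ^ n - 3 * max 0 (t - 1) ^ n + 3 * max 0 (t - 2) ^ n - max 0 (t - 3) ^ n"

lemma has_real_derivative_spline:
  assumes "n > 0"
  shows "(spline (Suc n) has_real_derivative real (Suc n) * spline n t) (at t)"
proof -
  have shifted: "((\<lambda>t. max 0 (t - c) ^ Suc n) has_real_derivative real (Suc n) * max 0 (t - c) ^ n) (at t)"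
    for c :: real
    using DERIV_chain2[OF has_real_derivative_max0_power[OF assms] DERIV_diff[OF DERIV_ident DERIV_const]]
    by simp
  have "(spline (Suc n) has_real_derivative
      real (Suc n) * max 0 t ^ n - 3 * (real (Suc n) * max 0 (t - 1) ^ n)
      + 3 * (real (Suc n) * max 0 (t - 2) ^ n) - real (Suc n) * max 0 (t - 3) ^ n) (at t)"
    unfolding spline_def[abs_def]
    using shifted[of 0] by (intro DERIV_diff DERIV_add DERIV_cmult shifted) simp_all
  then show ?thesis by (simp add: spline_def algebra_simps)
qed

lemma continuous_on_spline [continuous_intros]:
  "continuous_on S f \<Longrightarrow> continuous_on S (\<lambda>x. spline n (f x))"
  unfolding spline_def by (intro continuous_intros)

lemma spline_nonpos: "t \<le> 0 \<Longrightarrow> spline n t = 0"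
  by (simp add: spline_def)

lemma spline_ge_3:
  assumes "3 \<le> t"
  shows "spline 1 t = 0" "spline 2 t = 0" "spline 3 t = 6"
  using assms by (simp_all add: spline_def max_def power2_eq_square power3_eq_cube algebra_simps)

lemma bounded_range_spline:
  assumes "n \<in> {1, 2, 3}"
  shows "bounded (range (spline n))"
proof -
  have "spline n t \<in> spline n ` {0..3}" for t
  proof -
    consider "t \<le> 0" | "t \<in> {0..3}" | "3 \<le> t" by fastforce
    then show ?thesis
    proof cases
      case 1 then show ?thesis using spline_nonpos[of t n] spline_nonpos[of 0 n] by force
    next
      case 3 then show ?thesis
        using assms spline_ge_3[of t] spline_ge_3[of 3] by (intro image_eqI[of _ _ 3]) auto
    qed auto
  qed
  then have "range (spline n) \<subseteq> spline n ` {0..3}" by blast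
  moreover have "compact (spline n ` {0..3})"
    by (intro compact_continuous_image continuous_intros continuous_on_id) simp
  ultimately show ?thesis using bounded_subset compact_imp_bounded by blast
qed

lemma spline_2_nonneg: "0 \<le> spline 2 t"
proof -
  consider "t \<le> 1" | "1 \<le> t" "t \<le> 2" | "2 \<le> t" "t \<le> 3" | "3 \<le> t" by linarith
  then show ?thesis
  proof cases
    case 2
    then have "(t - 1) * (t - 2) \<le> 0" by (simp add: mult_nonneg_nonpos)
    with 2 show ?thesis by (simp add: spline_def max_def power2_eq_square algebra_simps)
  next
    case 3
    have "t\<^sup>2 - 3 * (t - 1)\<^sup>2 + 3 * (t - 2)\<^sup>2 = (t - 3)\<^sup>2" by (simp add: power2_eq_square algebra_simps)
    with 3 show ?thesis by (simp add: spline_def max_def)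
  next
    case 4 then show ?thesis by (simp add: spline_ge_3)
  qed (simp add: spline_def max_def)
qed

lemma spline_2_ge_1:
  assumes "1 \<le> t" "t \<le> 2"
  shows "1 \<le> spline 2 t"
proof -
  have "(t - 1) * (t - 2) \<le> 0" using assms by (simp add: mult_nonneg_nonpos)
  with assms show ?thesis by (simp add: spline_def max_def power2_eq_square algebra_simps)
qed

lemma spline_2_support: "spline 2 t \<noteq> 0 \<Longrightarrow> 0 < t \<and> t < 3"
  using spline_nonpos[of t 2] spline_ge_3(2)[of t] by fastforce

definition mollifier :: "real \<Rightarrow> real^2 \<Rightarrow> real" where
  "mollifier l z = spline 2 (z$1 / l) * spline 2 (z$2 / l)"

lemma spline_bound:
  obtains B where
    "\<And>n m t s. n \<in> {1, 2, 3} \<Longrightarrow> m \<in> {1, 2, 3} \<Longrightarrow> \<bar>spline n t * spline m s\<bar> \<le> B * B"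
proof -
  have "bounded (\<Union>n\<in>{1, 2, 3}. range (spline n))"
    using bounded_range_spline by (intro bounded_UN) auto
  then obtain B where B: "\<And>n t. n \<in> {1, 2, 3} \<Longrightarrow> \<bar>spline n t\<bar> \<le> B"
    unfolding bounded_real by blast
  have "\<bar>spline n t * spline m s\<bar> \<le> B * B" if "n \<in> {1, 2, 3}" "m \<in> {1, 2, 3}" for n m t s
    unfolding abs_mult by (rule mult_mono[OF B[OF that(1)] B[OF that(2)]])
      (use order_trans[OF abs_ge_zero B[OF that(1)]] in auto)
  then show ?thesis by (rule that)
qed

lemma
  assumes "l > 0"
  defines "D\<Psi> \<equiv> \<lambda>z h. mollifier l z * h$1 + 2 / 3 * spline 3 (z$1 / l) * spline 1 (z$2 / l) * h$2"
  shows C1_function_mollifier_potential: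
      "C1_function (\<lambda>z. l / 3 * spline 3 (z$1 / l) * spline 2 (z$2 / l)) D\<Psi>"
    and mollifier_potential_partial_1: "D\<Psi> z (axis 1 1) = mollifier l z"
    and mollifier_potential_partials_bounded: "\<exists>M. \<forall>j z. \<bar>D\<Psi> z (axis j 1)\<bar> \<le> M"
proof -
  have coord: "((\<lambda>z::real^2. z$i / l) has_derivative (\<lambda>h. h$i / l)) (at z)" for i z
    by (intro bounded_linear_imp_has_derivative bounded_linear_compose[OF bounded_linear_divide]
        bounded_linear_vec_nth)
  have d3: "(spline 3 has_real_derivative 3 * spline 2 t) (at t)" for t
    using has_real_derivative_spline[of 2 t] by simp
  have d2: "(spline 2 has_real_derivative 2 * spline 1 t) (at t)" for t
    using has_real_derivative_spline[of 1 t] by (simp add: numeral_2_eq_2)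
  have "((\<lambda>z. l / 3 * spline 3 (z$1 / l) * spline 2 (z$2 / l)) has_derivative D\<Psi> z) (at z)" for z
  proof -
    have "((\<lambda>z. spline 3 (z$1 / l) * spline 2 (z$2 / l)) has_derivative
        (\<lambda>h. spline 3 (z$1 / l) * (h$2 / l * (2 * spline 1 (z$2 / l)))
          + h$1 / l * (3 * spline 2 (z$1 / l)) * spline 2 (z$2 / l))) (at z)"
      by (rule has_derivative_mult[OF DERIV_compose_FDERIV[OF d3 coord] DERIV_compose_FDERIV[OF d2 coord]])
    from has_derivative_mult_right[OF this, of "l / 3"] show ?thesis
      using assms by (simp add: mollifier_def mult.assoc algebra_simps)
  qed
  moreover have "continuous_on UNIV (\<lambda>z. D\<Psi> z (axis j 1))" for j
    unfolding D\<Psi>_def mollifier_def by (intro continuous_intros) (use assms in auto)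
  ultimately show "C1_function (\<lambda>z. l / 3 * spline 3 (z$1 / l) * spline 2 (z$2 / l)) D\<Psi>"
    by (simp add: C1_function_def)
  show "D\<Psi> z (axis 1 1) = mollifier l z"
    by (simp add: D\<Psi>_def axis_def)
  obtain B where "\<And>n m t s. n \<in> {1, 2, 3} \<Longrightarrow> m \<in> {1, 2, 3} \<Longrightarrow>
      \<bar>spline n t * spline m s\<bar> \<le> B * B"
    using spline_bound by blast
  then have B: "\<And>t s. \<bar>spline 2 t * spline 2 s\<bar> \<le> B * B" "\<And>t s. \<bar>spline 3 t * spline 1 s\<bar> \<le> B * B"
    by simp_all
  have "\<bar>D\<Psi> z (axis j 1)\<bar> \<le> B * B" for j :: 2 and z
  proof (cases "j = 1")
    case True
    then show ?thesis using B(1) by (simp add: D\<Psi>_def mollifier_def axis_def)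
  next
    case False
    then have "j = 2" using exhaust_2[of j] by blast
    have "\<bar>2 / 3 * (spline 3 (z$1 / l) * spline 1 (z$2 / l))\<bar> \<le> B * B"
      using B(2)[of "z$1 / l" "z$2 / l"] abs_ge_zero[of "spline 3 (z$1 / l) * spline 1 (z$2 / l)"]
      unfolding abs_mult[of "2 / 3"] by simp
    then show ?thesis using \<open>j = 2\<close> by (simp add: D\<Psi>_def axis_def mult.assoc)
  qed
  then show "\<exists>M. \<forall>j z. \<bar>D\<Psi> z (axis j 1)\<bar> \<le> M" by blast
qed

lemma
  assumes "l > 0"
  shows mollifier_nonneg: "0 \<le> mollifier l z"
    and borel_measurable_mollifier: "mollifier l \<in> borel_measurable borel"
    and bounded_range_mollifier: "bounded (range (mollifier l))"
    and mollifier_support: "mollifier l z \<noteq> 0 \<Longrightarrow> norm z < 6 * l"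
proof -
  show "0 \<le> mollifier l z" by (simp add: mollifier_def spline_2_nonneg)
  show "mollifier l \<in> borel_measurable borel"
    unfolding mollifier_def
    by (intro borel_measurable_continuous_onI continuous_intros) (use assms in auto)
  obtain B where "\<And>n m t s. n \<in> {1, 2, 3} \<Longrightarrow> m \<in> {1, 2, 3} \<Longrightarrow>
      \<bar>spline n t * spline m s\<bar> \<le> B * B"
    using spline_bound by blast
  then have "\<bar>mollifier l z\<bar> \<le> B * B" for z
    unfolding mollifier_def by simp
  then show "bounded (range (mollifier l))" by (auto simp: bounded_real)
  assume "mollifier l z \<noteq> 0"
  then have "\<bar>z$1\<bar> < 3 * l" "\<bar>z$2\<bar> < 3 * l"
    using spline_2_support[of "z$1 / l"] spline_2_support[of "z$2 / l"] assms
    by (auto simp: mollifier_def field_simps)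
  moreover have "norm z \<le> \<bar>z$1\<bar> + \<bar>z$2\<bar>" using norm_le_l1_cart[of z] by (simp add: sum_2)
  ultimately show "norm z < 6 * l" by linarith
qed

lemma integrable_mollifier:
  assumes "l > 0"
  shows "integrable lborel (mollifier l)"
proof -
  obtain B where B: "\<And>z. \<bar>mollifier l z\<bar> \<le> B"
    using bounded_range_mollifier[OF assms] by (auto simp: bounded_real)
  show ?thesis
  proof (rule Bochner_Integration.integrable_bound)
    show "integrable lborel (\<lambda>z. B * indicator (cball (0::real^2) (6 * l)) z :: real)"
      using emeasure_bounded_finite[of "cball (0::real^2) (6 * l)"] by simp
    show "AE z in lborel. norm (mollifier l z) \<le> norm (B * indicator (cball (0::real^2) (6 * l)) z :: real)"
    proof (intro AE_I2)
      fix z :: "real^2"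
      show "norm (mollifier l z) \<le> norm (B * indicator (cball (0::real^2) (6 * l)) z :: real)"
      proof (cases "mollifier l z = 0")
        case False
        then show ?thesis using B[of z] mollifier_support[OF assms False] by simp
      qed simp
    qed
  qed (use borel_measurable_mollifier[OF assms] in simp)
qed

lemma integral_mollifier_pos:
  assumes "l > 0"
  shows "0 < (\<integral>z. mollifier l z \<partial>lborel)"
proof -
  define a :: "real^2" where "a = (\<chi> i. l)"
  define b :: "real^2" where "b = (\<chi> i. 2 * l)"
  have "indicator (cbox a b) z \<le> mollifier l z" for z
  proof (cases "z \<in> cbox a b")
    case True
    then have "1 \<le> z$i / l \<and> z$i / l \<le> 2" for i
      using assms by (auto simp: a_def b_def mem_box_cart field_simps)
    then have "1 \<le> spline 2 (z$1 / l)" "1 \<le> spline 2 (z$2 / l)"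
      using spline_2_ge_1 by auto
    then have "1 * 1 \<le> spline 2 (z$1 / l) * spline 2 (z$2 / l)"
      by (intro mult_mono) auto
    then show ?thesis using True by (simp add: mollifier_def)
  qed (simp add: mollifier_nonneg[OF assms])
  then have "(\<integral>z. indicator (cbox a b) z \<partial>lborel) \<le> (\<integral>z. mollifier l z \<partial>lborel)"
    using integrable_mollifier[OF assms] emeasure_bounded_finite[of "cbox a b"]
    by (intro integral_mono) auto
  then have "measure lborel (cbox a b) \<le> (\<integral>z. mollifier l z \<partial>lborel)"
    using emeasure_bounded_finite[of "cbox a b"] by simp
  moreover have "0 < measure lborel (cbox a b)"
  proof -
    have "\<forall>c\<in>Basis. a \<bullet> c \<le> b \<bullet> c" "\<forall>c\<in>Basis. 0 < (b - a) \<bullet> c"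
      using assms by (auto simp: a_def b_def Basis_vec_def inner_axis)
    then show ?thesis by (simp add: measure_lborel_cbox_eq prod_pos)
  qed
  ultimately show ?thesis by linarith
qed

lemma integral_cross_div_free:
  fixes a b :: "2 \<Rightarrow> real^2 \<Rightarrow> real"
  assumes div: "weakly_div_free a" "weakly_div_free b"
    and L2: "\<And>j. L2 (a j)" "\<And>j. L2 (b j)"
    and S: "bounded S" "S \<in> sets borel"
    and supp: "\<And>j x. x \<notin> S \<Longrightarrow> a j x = 0" "\<And>j x. x \<notin> S \<Longrightarrow> b j x = 0"
  shows "(\<integral>x. a 1 x * b 2 x \<partial>lborel) = (\<integral>x. a 2 x * b 1 x \<partial>lborel)"
proof -
  have meas: "\<And>j. a j \<in> borel_measurable borel" "\<And>j. b j \<in> borel_measurable borel"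
    using L2 by (simp_all add: L2_def)
  have int: "\<And>j. integrable lborel (a j)" "\<And>j. integrable lborel (b j)"
    using L2_bounded_support_integrable[OF _ S] L2 supp by blast+
  have lim: "((\<lambda>l. (\<integral>x. a i x * convolve (b j) (mollifier l) x \<partial>lborel) / (\<integral>z. mollifier l z \<partial>lborel))
      \<longlongrightarrow> (\<integral>x. a i x * b j x \<partial>lborel)) (at_right 0)" for i j
  proof (rule tendsto_convolution_pairing_mollifier[OF L2(1) int(1) L2(2) int(2) S(1) supp(2)])
    fix r :: real assume "r > 0"
    show "\<forall>\<^sub>F l in at_right 0. \<forall>z. mollifier l z \<noteq> 0 \<longrightarrow> norm z < r"
    proof (rule eventually_at_rightI[of _ "r / 6"])
      fix l assume "l \<in> {0<..<r / 6}"
      then show "\<forall>z. mollifier l z \<noteq> 0 \<longrightarrow> norm z < r"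
        using mollifier_support[of l] by fastforce
    qed (use \<open>r > 0\<close> in simp)
  qed (auto simp: mollifier_nonneg borel_measurable_mollifier bounded_range_mollifier
      integrable_mollifier integral_mollifier_pos)
  have "\<forall>\<^sub>F l in at_right 0. (\<integral>x. a 1 x * convolve (b 2) (mollifier l) x \<partial>lborel)
      = (\<integral>x. a 2 x * convolve (b 1) (mollifier l) x \<partial>lborel)"
    using eventually_at_right_less
  proof eventually_elim
    case (elim l)
    obtain M where "\<And>(j :: 2) z. \<bar>mollifier l z * axis j 1 $ 1
        + 2 / 3 * spline 3 (z$1 / l) * spline 1 (z$2 / l) * axis j 1 $ 2\<bar> \<le> M"
      using mollifier_potential_partials_bounded[OF elim] by blast
    from convolution_pairing_cross[OF div meas int C1_function_mollifier_potential[OF elim] this]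
    show ?case by (simp only: mollifier_potential_partial_1[OF elim])
  qed
  then have "\<forall>\<^sub>F l in at_right 0.
      (\<integral>x. a 1 x * convolve (b 2) (mollifier l) x \<partial>lborel) / (\<integral>z. mollifier l z \<partial>lborel)
    = (\<integral>x. a 2 x * convolve (b 1) (mollifier l) x \<partial>lborel) / (\<integral>z. mollifier l z \<partial>lborel)"
    by (rule eventually_mono) simp
  with lim[of 1 2] have "((\<lambda>l. (\<integral>x. a 2 x * convolve (b 1) (mollifier l) x \<partial>lborel) / (\<integral>z. mollifier l z \<partial>lborel))
      \<longlongrightarrow> (\<integral>x. a 1 x * b 2 x \<partial>lborel)) (at_right 0)"
    by (rule Lim_transform_eventually)
  from tendsto_unique[OF trivial_limit_at_right_real this lim[of 2 1]] show ?thesis .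
qed

lemma set_lebesgue_integral_eq_lborel:
  fixes F G :: "'a::euclidean_space \<Rightarrow> real"
  assumes F: "(\<lambda>x. indicator \<Omega> x * F x) \<in> borel_measurable lebesgue"
    and G: "G \<in> borel_measurable borel" and eq: "AE x in lborel. indicator \<Omega> x * F x = G x"
  shows "(LINT x:\<Omega>|lebesgue. F x) = integral\<^sup>L lborel G"
proof -
  have G': "G \<in> borel_measurable lebesgue"
    using measurable_completion[of G lborel borel] G by simp
  have "(LINT x:\<Omega>|lebesgue. F x) = (\<integral>x. G x \<partial>lebesgue)"
    unfolding set_lebesgue_integral_def
    using F G' AE_completion[OF eq] by (intro integral_cong_AE) simp_all
  also have "\<dots> = integral\<^sup>L lborel G"
    using G by (intro integral_completion) simp
  finally show ?thesis .
qed

lemma residual_stress_borel_representative: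
  fixes \<Omega> :: "(real^2) set" and \<sigma> :: "real^2 \<Rightarrow> real^2^2"
  assumes rs: "residual_stress \<Omega> \<sigma>" and "open \<Omega>"
  obtains f :: "2 \<Rightarrow> 2 \<Rightarrow> real^2 \<Rightarrow> real" where
    "\<And>i j. f i j \<in> borel_measurable borel" "\<And>i j x. f i j x = f j i x"
    "\<And>i j x. x \<notin> \<Omega> \<Longrightarrow> f i j x = 0"
    "AE x in lborel. \<forall>i j. indicator \<Omega> x * \<sigma> x $ i $ j = f i j x"
proof -
  have sym: "\<sigma> x $ i $ j = \<sigma> x $ j $ i" if "x \<in> \<Omega>" for x i j
  proof -
    have "transpose (\<sigma> x) $ i $ j = \<sigma> x $ i $ j"
      using rs that unfolding residual_stress_def by simp
    then show ?thesis by (simp add: transpose_def)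
  qed
  define e where "e i j x = indicator \<Omega> x * \<sigma> x $ i $ j" for i j x
  have e_meas[measurable]: "e i j \<in> borel_measurable lebesgue" for i j
    using rs unfolding residual_stress_def set_borel_measurable_def e_def[abs_def] by simp
  have "\<forall>ij. \<exists>g\<in>borel_measurable lborel. AE x in lborel. e (fst ij) (snd ij) x = g x"
    using completion_ex_borel_measurable_real[OF e_meas] by blast
  then obtain G where G_meas: "\<And>ij. G ij \<in> borel_measurable lborel"
    and G_ae: "\<And>ij. AE x in lborel. e (fst ij) (snd ij) x = G ij x"
    by metis
  (* averaging with the transpose makes the representative symmetric everywhere *)
  define f where "f i j x = indicator \<Omega> x * (G (i, j) x + G (j, i) x) / 2" for i j x
  have [measurable]: "G ij \<in> borel_measurable borel" for ij using G_meas by simp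
  have [measurable]: "\<Omega> \<in> sets borel" using \<open>open \<Omega>\<close> by simp
  have "f i j \<in> borel_measurable borel" for i j
    unfolding f_def[abs_def] by measurable
  moreover have "f i j x = f j i x" "x \<notin> \<Omega> \<Longrightarrow> f i j x = 0" for i j x
    by (simp_all add: f_def add.commute)
  moreover have "AE x in lborel. \<forall>ij\<in>UNIV. e (fst ij) (snd ij) x = G ij x"
    using G_ae by (intro AE_finite_allI) simp_all
  then have "AE x in lborel. \<forall>i j. indicator \<Omega> x * \<sigma> x $ i $ j = f i j x"
  proof eventually_elim
    case (elim x)
    show ?case
    proof (cases "x \<in> \<Omega>")
      case True
      then have "G (i, j) x = \<sigma> x $ i $ j" for i j using elim by (simp add: e_def)
      with sym[OF True] show ?thesis by (simp add: f_def True)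
    qed (simp add: f_def)
  qed
  ultimately show ?thesis by (rule that)
qed

lemma residual_stress_representative_L2:
  fixes \<Omega> :: "(real^2) set" and \<sigma> :: "real^2 \<Rightarrow> real^2^2"
  assumes rs: "residual_stress \<Omega> \<sigma>" and f[measurable]: "f \<in> borel_measurable borel"
    and ae: "AE x in lborel. indicator \<Omega> x * \<sigma> x $ i $ j = f x"
  shows "L2 f"
proof -
  have [measurable]: "f \<in> borel_measurable lebesgue"
    using measurable_completion[of f lborel borel] by simp
  have "(\<lambda>x. (indicator \<Omega> x * \<sigma> x $ i $ j)\<^sup>2) = (\<lambda>x. indicator \<Omega> x * (\<sigma> x $ i $ j)\<^sup>2)"
    by (auto simp: indicator_def)
  then have "integrable lebesgue (\<lambda>x. (indicator \<Omega> x * \<sigma> x $ i $ j)\<^sup>2)"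
    using rs unfolding residual_stress_def set_integrable_def by simp
  moreover have "AE x in lebesgue. (indicator \<Omega> x * \<sigma> x $ i $ j)\<^sup>2 = (f x)\<^sup>2"
    using AE_completion[OF ae] by eventually_elim simp
  moreover have "(\<lambda>x. (f x)\<^sup>2) \<in> borel_measurable lebesgue" by measurable
  ultimately have "integrable lebesgue (\<lambda>x. (f x)\<^sup>2)"
    by (blast intro: integrable_cong_AE_imp)
  then show ?thesis
    using integrable_completion[of "\<lambda>x. (f x)\<^sup>2" lborel] by (simp add: L2_def)
qed

lemma residual_stress_representative_div_free:
  fixes \<Omega> :: "(real^2) set" and \<sigma> :: "real^2 \<Rightarrow> real^2^2"
  assumes rs: "residual_stress \<Omega> \<sigma>" and f[measurable]: "\<And>i j. f i j \<in> borel_measurable borel"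
    and ae: "AE x in lborel. \<forall>i j. indicator \<Omega> x * \<sigma> x $ i $ j = f i j x"
  shows "weakly_div_free (f i)"
proof (rule weakly_div_free_row)
  fix v Dv assume C1: "C1_field v Dv"
  define D where "D i j x = Dv x (axis j 1) $ i" for i j x
  have [measurable]: "D i j \<in> borel_measurable borel" for i j
    using C1 unfolding C1_field_def D_def by (auto intro: borel_measurable_continuous_onI)
  have [measurable]: "D i j \<in> borel_measurable lebesgue" "f i j \<in> borel_measurable lebesgue" for i j
    using measurable_completion[of "D i j" lborel borel] measurable_completion[of "f i j" lborel borel]
    by simp_all
  have [measurable]: "(\<lambda>x. indicator \<Omega> x * \<sigma> x $ i $ j) \<in> borel_measurable lebesgue" for i j
    using rs unfolding residual_stress_def set_borel_measurable_def by simp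
  have ind: "indicator \<Omega> x * (\<Sum>i\<in>UNIV. \<Sum>j\<in>UNIV. \<sigma> x $ i $ j * D i j x)
    = (\<Sum>i\<in>UNIV. \<Sum>j\<in>UNIV. (indicator \<Omega> x * \<sigma> x $ i $ j) * D i j x)" for x
    by (simp add: sum_distrib_left mult.assoc)
  have "0 = (LINT x:\<Omega>|lebesgue. (\<Sum>i\<in>UNIV. \<Sum>j\<in>UNIV. \<sigma> x $ i $ j * D i j x))"
    using rs C1 unfolding residual_stress_def D_def by simp
  also have "\<dots> = (\<integral>x. (\<Sum>i\<in>UNIV. \<Sum>j\<in>UNIV. f i j x * D i j x) \<partial>lborel)"
    using ae by (intro set_lebesgue_integral_eq_lborel) (simp_all only: ind, measurable, auto elim: eventually_mono)
  finally show "(\<integral>x. (\<Sum>i\<in>UNIV. \<Sum>j\<in>UNIV. f i j x * (Dv x (axis j 1) $ i)) \<partial>lborel) = 0"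
    by (simp add: D_def)
qed

lemma residual_stress_zero_extension:
  fixes \<Omega> :: "(real^2) set" and \<sigma> :: "real^2 \<Rightarrow> real^2^2"
  assumes "residual_stress \<Omega> \<sigma>" and "open \<Omega>"
  obtains f :: "2 \<Rightarrow> 2 \<Rightarrow> real^2 \<Rightarrow> real" where
    "\<And>i j. L2 (f i j)" "\<And>i j x. f i j x = f j i x" "\<And>i j x. x \<notin> \<Omega> \<Longrightarrow> f i j x = 0"
    "AE x in lborel. \<forall>i j. indicator \<Omega> x * \<sigma> x $ i $ j = f i j x"
    "\<And>i. weakly_div_free (f i)"
proof -
  obtain f where f: "\<And>i j. f i j \<in> borel_measurable borel" "\<And>i j x. f i j x = f j i x"
    "\<And>i j x. x \<notin> \<Omega> \<Longrightarrow> f i j x = 0"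
    "AE x in lborel. \<forall>i j. indicator \<Omega> x * \<sigma> x $ i $ j = f i j x"
    using residual_stress_borel_representative[OF assms] by blast
  moreover have "L2 (f i j)" for i j
    using f(4) by (intro residual_stress_representative_L2[OF assms(1) f(1)]) (auto elim: eventually_mono)
  moreover have "weakly_div_free (f i)" for i
    by (rule residual_stress_representative_div_free[OF assms(1) f(1,4)])
  ultimately show ?thesis using that by blast
qed

lemma residual_stress_integral_pairings:
  fixes \<sigma>1 \<sigma>2 :: "real^2 \<Rightarrow> real^2^2" and f g :: "2 \<Rightarrow> 2 \<Rightarrow> real^2 \<Rightarrow> real"
  assumes rs: "residual_stress \<Omega> \<sigma>1" "residual_stress \<Omega> \<sigma>2"
    and f: "\<And>i j. L2 (f i j)" "AE x in lborel. \<forall>i j. indicator \<Omega> x * \<sigma>1 x $ i $ j = f i j x"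
    and g: "\<And>i j. L2 (g i j)" "AE x in lborel. \<forall>i j. indicator \<Omega> x * \<sigma>2 x $ i $ j = g i j x"
  shows "(LINT x:\<Omega>|lebesgue. full_contraction (\<sigma>1 x) (\<sigma>2 x))
      = (\<Sum>i\<in>UNIV. \<Sum>j\<in>UNIV. \<integral>x. f i j x * g i j x \<partial>lborel)"
    and "(LINT x:\<Omega>|lebesgue. planar_trace (\<sigma>1 x) * planar_trace (\<sigma>2 x))
      = (\<Sum>i\<in>UNIV. \<Sum>j\<in>UNIV. \<integral>x. f i i x * g j j x \<partial>lborel)"
proof -
  define e1 where "e1 i j x = indicator \<Omega> x * \<sigma>1 x $ i $ j" for i j x
  define e2 where "e2 i j x = indicator \<Omega> x * \<sigma>2 x $ i $ j" for i j x
  have [measurable]: "e1 i j \<in> borel_measurable lebesgue" "e2 i j \<in> borel_measurable lebesgue" for i j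
    using rs unfolding residual_stress_def set_borel_measurable_def e1_def[abs_def] e2_def[abs_def] by simp_all
  have [measurable]: "f i j \<in> borel_measurable borel" "g i j \<in> borel_measurable borel" for i j
    using f(1) g(1) by (simp_all add: L2_def)
  have ae: "AE x in lborel. \<forall>i j. e1 i j x = f i j x \<and> e2 i j x = g i j x"
    using f(2) g(2) by eventually_elim (simp add: e1_def e2_def)
  have int: "integrable lborel (\<lambda>x. f i j x * g k l x)" for i j k l
    by (rule L2_integrable_mult[OF f(1) g(1)])
  have "indicator \<Omega> x * full_contraction (\<sigma>1 x) (\<sigma>2 x) = (\<Sum>i\<in>UNIV. \<Sum>j\<in>UNIV. e1 i j x * e2 i j x)" for x
    by (simp add: full_contraction_def e1_def e2_def indicator_def)
  then have "(LINT x:\<Omega>|lebesgue. full_contraction (\<sigma>1 x) (\<sigma>2 x))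
      = (\<integral>x. (\<Sum>i\<in>UNIV. \<Sum>j\<in>UNIV. f i j x * g i j x) \<partial>lborel)"
    using ae by (intro set_lebesgue_integral_eq_lborel) (simp_all, measurable, auto elim: eventually_mono)
  also have "\<dots> = (\<Sum>i\<in>UNIV. \<Sum>j\<in>UNIV. \<integral>x. f i j x * g i j x \<partial>lborel)"
    using int by (simp add: Bochner_Integration.integral_sum)
  finally show "(LINT x:\<Omega>|lebesgue. full_contraction (\<sigma>1 x) (\<sigma>2 x))
      = (\<Sum>i\<in>UNIV. \<Sum>j\<in>UNIV. \<integral>x. f i j x * g i j x \<partial>lborel)" .
  have "indicator \<Omega> x * (planar_trace (\<sigma>1 x) * planar_trace (\<sigma>2 x))
      = (\<Sum>i\<in>UNIV. \<Sum>j\<in>UNIV. e1 i i x * e2 j j x)" for x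
    by (simp add: planar_trace_def e1_def e2_def indicator_def sum_product)
  then have "(LINT x:\<Omega>|lebesgue. planar_trace (\<sigma>1 x) * planar_trace (\<sigma>2 x))
      = (\<integral>x. (\<Sum>i\<in>UNIV. \<Sum>j\<in>UNIV. f i i x * g j j x) \<partial>lborel)"
    using ae by (intro set_lebesgue_integral_eq_lborel) (simp_all, measurable, auto elim: eventually_mono)
  also have "\<dots> = (\<Sum>i\<in>UNIV. \<Sum>j\<in>UNIV. \<integral>x. f i i x * g j j x \<partial>lborel)"
    using int by (simp add: Bochner_Integration.integral_sum)
  finally show "(LINT x:\<Omega>|lebesgue. planar_trace (\<sigma>1 x) * planar_trace (\<sigma>2 x))
      = (\<Sum>i\<in>UNIV. \<Sum>j\<in>UNIV. \<integral>x. f i i x * g j j x \<partial>lborel)" .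
qed

theorem theorem3:
  fixes \<Omega> :: "(real^2) set" and \<sigma>1 \<sigma>2 :: "real^2 \<Rightarrow> real^2^2"
  assumes "open \<Omega>" and "bounded \<Omega>"
    and "residual_stress \<Omega> \<sigma>1" and "residual_stress \<Omega> \<sigma>2"
  shows "(LINT x:\<Omega>|lebesgue. full_contraction (\<sigma>1 x) (\<sigma>2 x))
       = (LINT x:\<Omega>|lebesgue. planar_trace (\<sigma>1 x) * planar_trace (\<sigma>2 x))"
proof -
  obtain f where f: "\<And>i j. L2 (f i j)" "\<And>i j x. f i j x = f j i x" "\<And>i j x. x \<notin> \<Omega> \<Longrightarrow> f i j x = 0"
    "AE x in lborel. \<forall>i j. indicator \<Omega> x * \<sigma>1 x $ i $ j = f i j x" "\<And>i. weakly_div_free (f i)"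
    using residual_stress_zero_extension[OF assms(3,1)] by blast
  obtain g where g: "\<And>i j. L2 (g i j)" "\<And>i j x. g i j x = g j i x" "\<And>i j x. x \<notin> \<Omega> \<Longrightarrow> g i j x = 0"
    "AE x in lborel. \<forall>i j. indicator \<Omega> x * \<sigma>2 x $ i $ j = g i j x" "\<And>i. weakly_div_free (g i)"
    using residual_stress_zero_extension[OF assms(4,1)] by blast
  have "\<Omega> \<in> sets borel" using \<open>open \<Omega>\<close> by simp
  note cross = integral_cross_div_free[OF f(5) g(5) f(1) g(1) \<open>bounded \<Omega>\<close> this f(3) g(3)]
  have "(\<integral>x. f 1 2 x * g 1 2 x \<partial>lborel) = (\<integral>x. f 1 1 x * g 2 2 x \<partial>lborel)"
    "(\<integral>x. f 2 1 x * g 2 1 x \<partial>lborel) = (\<integral>x. f 2 2 x * g 1 1 x \<partial>lborel)"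
    using cross[of 1 2] cross[of 2 1] g(2)[of 1 2] by simp_all
  then show ?thesis
    unfolding residual_stress_integral_pairings[OF assms(3,4) f(1,4) g(1,4)] by (simp add: sum_2)
qed

end
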